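(* Let $d\ge 1$ and let $\mathcal{C}$ be a chordal $d$-uniform clutter on the vertex set $[n]$ with a simplicial order $e_1,\ldots,e_r$, and let $\{N_1,\ldots,N_r\}$ be the simplicial multiset associated with this order. Put $M_i=\sum_{k=1}^r\binom{N_k}{i}$ and let $\Delta=\Delta(\mathcal{C})$ be the clique complex of $\mathcal{C}$. Then \[ \mathbf{f}_\Delta(t)=\sum_{i=0}^{d-1}\binom{n}{i}t^i+t^{d-1}\sum_{i\ge 1}M_i t^i=\sum_{i=0}^{d-1}\binom{n}{i}t^i+t^{d-1}\sum_{i=1}^{r}\big((1+t)^{N_i}-1\big). \] In particular, $\dim\Delta=\max\{N_1,\ldots,N_r\}+(d-2)$.
   Context: A $d$-uniform clutter $\mathcal{C}$ on $[n]$ is a set of $d$-element subsets of $[n]$ (its circuits). A $(d-1)$-subset $e\subset[n]$ is a submaximal circuit of $\mathcal{C}$ if $e\subset F$ for some $F\in\mathcal{C}$. A subset $V\subseteq[n]$ is a clique of $\mathcal{C}$ if every $d$-subset of $V$ belongs to $\mathcal{C}$ (subsets with fewer than $d$ elements are cliques). The clique complex $\Delta(\mathcal{C})$ is the simplicial complex of all cliques. For a $(d-1)$-subset $e$, the open neighborhood is $\mathrm{N}_{\mathcal{C}}(e)=\{c\in[n]: e\cup\{c\}\in\mathcal{C}\}$ and the closed neighborhood is $\mathrm{N}_{\mathcal{C}}[e]=e\cup\mathrm{N}_{\mathcal{C}}(e)$; $e$ is simplicial in $\mathcal{C}$ if $e$ is a submaximal circuit of $\mathcal{C}$ and $\mathrm{N}_{\mathcal{C}}[e]$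 is a clique of $\mathcal{C}$. The deletion is $\mathcal{C}\setminus e=\{F\in\mathcal{C}: e\not\subset F\}$, and $\mathcal{C}_{e_1\cdots e_i}=(\cdots((\mathcal{C}\setminus e_1)\setminus e_2)\cdots)\setminus e_i$. A simplicial order of $\mathcal{C}$ is a sequence $e_1,\ldots,e_r$ of $(d-1)$-subsets such that $e_1$ is simplicial in $\mathcal{C}$, $e_i$ is simplicial in $\mathcal{C}_{e_1\cdots e_{i-1}}$ for $i>1$, and $\mathcal{C}_{e_1\cdots e_r}=\emptyset$; $\mathcal{C}$ is chordal if it admits a simplicial order (the empty clutter is chordal). The simplicial multiset of the order is $\{N_1,\ldots,N_r\}$ with $N_1=|\mathrm{N}_{\mathcal{C}}(e_1)|$ and $N_i=|\mathrm{N}_{\mathcal{C}_{e_1\cdots e_{i-1}}}(e_i)|$ for $i>1$. For a simplicial complex $\Delta$ with $f_{i}$ faces of dimension $i$ (so $f_{i-1}$ faces of cardinality $i$, $f_{-1}=1$), the $\mathbf{f}$-polynomial is $\mathbf{f}_\Delta(t)=\sum_{i\ge0}f_{i-1}t^i$. *)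

theory Defs
  imports "HOL-Computational_Algebra.Polynomial"
begin

definition is_clique :: "nat \<Rightarrow> nat set set \<Rightarrow> nat set \<Rightarrow> bool" where
  "is_clique d C V \<longleftrightarrow> (\<forall>S. S \<subseteq> V \<and> card S = d \<and> finite S \<longrightarrow> S \<in> C)"

definition clique_complex :: "nat \<Rightarrow> nat \<Rightarrow> nat set set \<Rightarrow> nat set set" where
  "clique_complex n d C = {V. V \<subseteq> {1..n} \<and> is_clique d C V}"

definition open_nbhd :: "nat \<Rightarrow> nat set set \<Rightarrow> nat set \<Rightarrow> nat set" where
  "open_nbhd n C e = {c \<in> {1..n}. e \<union> {c} \<in> C}"

definition closed_nbhd :: "nat \<Rightarrow> nat set set \<Rightarrow> nat set \<Rightarrow> nat set" where
  "closed_nbhd n C e = e \<union> open_nbhd n C e"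

definition submaximal :: "nat \<Rightarrow> nat set set \<Rightarrow> nat set \<Rightarrow> bool" where
  "submaximal d C e \<longleftrightarrow> finite e \<and> card e = d - 1 \<and> (\<exists>F\<in>C. e \<subseteq> F)"

definition simplicial :: "nat \<Rightarrow> nat \<Rightarrow> nat set set \<Rightarrow> nat set \<Rightarrow> bool" where
  "simplicial n d C e \<longleftrightarrow> submaximal d C e \<and> is_clique d C (closed_nbhd n C e)"

definition deletion :: "nat set set \<Rightarrow> nat set \<Rightarrow> nat set set" where
  "deletion C e = {F \<in> C. \<not> e \<subseteq> F}"

fun is_simplicial_order :: "nat \<Rightarrow> nat \<Rightarrow> nat set set \<Rightarrow> nat set list \<Rightarrow> bool" where
  "is_simplicial_order n d C [] \<longleftrightarrow> C = {}"
| "is_simplicial_order n d C (e # es) \<longleftrightarrow>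
     simplicial n d C e \<and> is_simplicial_order n d (deletion C e) es"

text \<open>The simplicial multiset [N_1,...,N_r] of an order, as a list.\<close>
fun simplicial_numbers :: "nat \<Rightarrow> nat set set \<Rightarrow> nat set list \<Rightarrow> nat list" where
  "simplicial_numbers n C [] = []"
| "simplicial_numbers n C (e # es) = card (open_nbhd n C e) # simplicial_numbers n (deletion C e) es"

definition uniform_clutter :: "nat \<Rightarrow> nat \<Rightarrow> nat set set \<Rightarrow> bool" where
  "uniform_clutter n d C \<longleftrightarrow> (\<forall>F\<in>C. F \<subseteq> {1..n} \<and> card F = d)"

definition f_poly :: "nat set set \<Rightarrow> int poly" where
  "f_poly \<Delta> = (\<Sum>\<sigma>\<in>\<Delta>. monom 1 (card \<sigma>))"

definition complex_dim :: "nat set set \<Rightarrow> int" where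
  "complex_dim \<Delta> = int (Max (card ` \<Delta>)) - 1"

end

theory Submission
  imports Defs
begin

text \<open>If \<open>e\<close> is simplicial, then, because \<open>N[e]\<close> is a clique, the cliques with at least \<open>d\<close>
  elements containing \<open>e\<close> are exactly the sets \<open>e \<union> S\<close> with \<open>S\<close> a nonempty subset of \<open>N(e)\<close>;
  they contribute \<open>t^(d-1) ((1 + t)^|N(e)| - 1)\<close> to the f-polynomial. Deleting \<open>e\<close> removes
  precisely these cliques and keeps all other cliques, so induction along the simplicial order
  yields the sum over the \<open>N_k\<close>, while sets with fewer than \<open>d\<close> elements are cliques vacuously.
  Comparing coefficients, \<open>M_i\<close> counts the faces with \<open>d - 1 + i\<close> elements, and \<open>M_i > 0\<close>
  exactly when \<open>i \<le> max N_k\<close>; this gives the dimension.\<close>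

lemma coeff_one_plus_X_power:
  "coeff ([:1, 1:] ^ N :: 'a::comm_semiring_1 poly) i = of_nat (N choose i)"
proof (cases "i \<le> N")
  case True
  then show ?thesis by (simp add: coeff_linear_poly_power)
next
  case False
  then show ?thesis by (simp add: coeff_eq_0 degree_linear_power binomial_eq_0)
qed

lemma coeff_sum_list_one_plus_X_powers:
  "coeff (\<Sum>N\<leftarrow>L. [:1, 1:] ^ N - 1 :: int poly) i =
     (if i = 0 then 0 else int (\<Sum>N\<leftarrow>L. N choose i))"
  by (induction L) (auto simp: coeff_one_plus_X_power)

lemma sum_list_one_plus_X_powers_eq:
  assumes "\<forall>N \<in> set L. N \<le> n"
  shows "(\<Sum>N\<leftarrow>L. [:1, 1:] ^ N - 1 :: int poly) =
           (\<Sum>i\<in>{1..n}. monom (int (\<Sum>N\<leftarrow>L. N choose i)) i)"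
proof (rule poly_eqI)
  fix i
  have "(\<Sum>N\<leftarrow>L. N choose i) = 0" if "n < i"
  proof -
    have "\<forall>N \<in> set L. N < i" using assms that by fastforce
    then show ?thesis by simp
  qed
  then show "coeff (\<Sum>N\<leftarrow>L. [:1, 1:] ^ N - 1) i =
      coeff (\<Sum>i\<in>{1..n}. monom (int (\<Sum>N\<leftarrow>L. N choose i)) i) i"
    by (auto simp: coeff_sum_list_one_plus_X_powers coeff_sum coeff_monom)
qed

lemma coeff_f_poly:
  "finite \<Delta> \<Longrightarrow> coeff (f_poly \<Delta>) k = int (card {\<sigma>\<in>\<Delta>. card \<sigma> = k})"
  unfolding f_poly_def by (simp add: coeff_sum coeff_monom sum.If_cases Int_def conj_commute)

lemma f_poly_union:
  "finite A \<Longrightarrow> finite B \<Longrightarrow> A \<inter> B = {} \<Longrightarrow> f_poly (A \<union> B) = f_poly A + f_poly B"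
  unfolding f_poly_def by (rule sum.union_disjoint)

lemma f_poly_Pow: "finite A \<Longrightarrow> f_poly (Pow A) = [:1, 1:] ^ card A"
proof (rule poly_eqI)
  fix k assume "finite A"
  then have "card {S \<in> Pow A. card S = k} = card A choose k"
    using n_subsets[of A k] by simp
  then show "coeff (f_poly (Pow A)) k = coeff ([:1, 1:] ^ card A) k"
    using \<open>finite A\<close> by (simp add: coeff_f_poly coeff_one_plus_X_power)
qed

lemma f_poly_join:
  assumes "finite e" and "\<And>S. S \<in> F \<Longrightarrow> finite S \<and> S \<inter> e = {}"
  shows "f_poly ((\<union>) e ` F) = monom 1 (card e) * f_poly F"
proof -
  have "inj_on ((\<union>) e) F"
    using assms(2) by (intro inj_onI) blast
  then have "f_poly ((\<union>) e ` F) = (\<Sum>S\<in>F. monom 1 (card (e \<union> S)))"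
    unfolding f_poly_def by (simp add: sum.reindex)
  also have "\<dots> = (\<Sum>S\<in>F. monom 1 (card e) * monom 1 (card S))"
    using assms by (intro sum.cong) (auto simp: card_Un_disjoint Int_commute mult_monom)
  finally show ?thesis
    unfolding f_poly_def by (simp add: sum_distrib_left)
qed

lemma f_poly_subsets_card_less:
  assumes "finite A"
  shows "f_poly {V. V \<subseteq> A \<and> card V < d} = (\<Sum>i<d. monom (int (card A choose i)) i)"
proof (rule poly_eqI)
  fix k
  have "finite {V. V \<subseteq> A \<and> card V < d}"
    by (rule finite_subset[of _ "Pow A"]) (auto simp: assms)
  moreover have "{V \<in> {V. V \<subseteq> A \<and> card V < d}. card V = k} =
      (if k < d then {V. V \<subseteq> A \<and> card V = k} else {})"
    by auto
  ultimately show "coeff (f_poly {V. V \<subseteq> A \<and> card V < d}) k =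
      coeff (\<Sum>i<d. monom (int (card A choose i)) i) k"
    using n_subsets[OF assms] by (simp add: coeff_f_poly coeff_sum coeff_monom)
qed

lemma Max_card_eq_add_Max:
  fixes \<Delta> :: "'a set set" and L :: "nat list"
  assumes "finite \<Delta>" and "L \<noteq> []" and "\<forall>N \<in> set L. 1 \<le> N"
    and face_numbers: "\<And>i. 1 \<le> i \<Longrightarrow> card {\<sigma> \<in> \<Delta>. card \<sigma> = c + i} = (\<Sum>N\<leftarrow>L. N choose i)"
  shows "Max (card ` \<Delta>) = c + Max (set L)"
proof -
  let ?m = "Max (set L)"
  have m: "?m \<in> set L" "\<And>N. N \<in> set L \<Longrightarrow> N \<le> ?m" using \<open>L \<noteq> []\<close> by simp_all
  then have "1 \<le> ?m" using assms(3) by blast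
  have "?m choose ?m \<le> (\<Sum>N\<leftarrow>L. N choose ?m)"
    using imageI[OF m(1), of "\<lambda>N. N choose ?m"] by (intro member_le_sum_list) simp_all
  then have "1 \<le> (\<Sum>N\<leftarrow>L. N choose ?m)" by simp
  then have "{\<sigma> \<in> \<Delta>. card \<sigma> = c + ?m} \<noteq> {}"
    using face_numbers[OF \<open>1 \<le> ?m\<close>] by (metis card.empty not_one_le_zero)
  then obtain \<tau> where "\<tau> \<in> \<Delta>" and "c + ?m = card \<tau>" by auto
  then have attained: "c + ?m \<in> card ` \<Delta>" by (rule rev_image_eqI)
  have "card \<sigma> \<le> c + ?m" if "\<sigma> \<in> \<Delta>" for \<sigma>
  proof (rule ccontr)
    assume "\<not> card \<sigma> \<le> c + ?m"
    then obtain i where i: "card \<sigma> = c + i" "?m < i"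
      by (intro that[of "card \<sigma> - c"]) arith+
    have "\<forall>N \<in> set L. N < i" using m(2) i(2) le_less_trans by blast
    then have "card {\<sigma> \<in> \<Delta>. card \<sigma> = c + i} = 0"
      using face_numbers[of i] \<open>1 \<le> ?m\<close> i(2) by simp
    moreover have "\<sigma> \<in> {\<sigma> \<in> \<Delta>. card \<sigma> = c + i}" using that i(1) by simp
    ultimately show False using \<open>finite \<Delta>\<close> by (auto simp: card_eq_0_iff)
  qed
  then show ?thesis
    using attained \<open>finite \<Delta>\<close> by (intro Max_eqI) auto
qed

lemma is_clique_subset: "is_clique d C V \<Longrightarrow> W \<subseteq> V \<Longrightarrow> is_clique d C W"
  unfolding is_clique_def by blast

lemma is_clique_mono: "is_clique d C V \<Longrightarrow> C \<subseteq> C' \<Longrightarrow> is_clique d C' V"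
  unfolding is_clique_def by blast

lemma is_clique_if_card_less: "finite V \<Longrightarrow> card V < d \<Longrightarrow> is_clique d C V"
  unfolding is_clique_def using card_mono leD by metis

lemma finite_clique_complex: "finite (clique_complex n d C)"
  unfolding clique_complex_def by (rule finite_subset[of _ "Pow {1..n}"]) auto

definition large_cliques :: "nat \<Rightarrow> nat \<Rightarrow> nat set set \<Rightarrow> nat set set" where
  "large_cliques n d C = {V \<in> clique_complex n d C. d \<le> card V}"

lemma clique_complex_eq_small_Un_large:
  "clique_complex n d C = {V. V \<subseteq> {1..n} \<and> card V < d} \<union> large_cliques n d C"
proof -
  have "is_clique d C V" if "V \<subseteq> {1..n}" and "card V < d" for V
    using finite_subset[OF that(1)] that(2) by (simp add: is_clique_if_card_less)
  then show ?thesis unfolding large_cliques_def clique_complex_def by auto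
qed

lemma f_poly_clique_complex_split:
  "f_poly (clique_complex n d C) =
     (\<Sum>i<d. monom (int (n choose i)) i) + f_poly (large_cliques n d C)"
proof -
  have "finite {V. V \<subseteq> {1..n} \<and> card V < d}"
    by (rule finite_subset[of _ "Pow {1..n}"]) auto
  moreover have "finite (large_cliques n d C)"
    unfolding large_cliques_def using finite_clique_complex by simp
  ultimately have "f_poly (clique_complex n d C) =
      f_poly {V. V \<subseteq> {1..n} \<and> card V < d} + f_poly (large_cliques n d C)"
    unfolding clique_complex_eq_small_Un_large
    by (intro f_poly_union) (auto simp: large_cliques_def)
  then show ?thesis using f_poly_subsets_card_less[of "{1..n}" d] by simp
qed

lemma large_cliques_empty:
  assumes "d \<ge> 1"
  shows "large_cliques n d {} = {}"
proof -
  have "\<not> is_clique d {} V" if large: "d \<le> card V" for V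
  proof -
    obtain S where "S \<subseteq> V" "card S = d" "finite S"
      using obtain_subset_with_card_n[OF large] .
    then show ?thesis unfolding is_clique_def by blast
  qed
  then show ?thesis unfolding large_cliques_def clique_complex_def by auto
qed

lemma large_clique_not_subset:
  assumes "V \<in> large_cliques n d C" and "finite e" and "card e < d"
  shows "\<not> V \<subseteq> e"
  using assms card_mono[of e V] unfolding large_cliques_def by auto

lemma uniform_clutter_deletion: "uniform_clutter n d C \<Longrightarrow> uniform_clutter n d (deletion C e)"
  unfolding uniform_clutter_def deletion_def by auto

lemma open_nbhd_subset: "open_nbhd n C e \<subseteq> {1..n}"
  unfolding open_nbhd_def by auto

lemma finite_open_nbhd: "finite (open_nbhd n C e)"
  using open_nbhd_subset by (rule finite_subset) simp

locale simplicial_deletion =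
  fixes n d :: nat and C :: "nat set set" and e :: "nat set"
  assumes d_pos: "d \<ge> 1"
    and uniform: "uniform_clutter n d C"
    and simplicial: "simplicial n d C e"
begin

lemma finite_e: "finite e" and card_e: "card e = d - 1" and e_subset: "e \<subseteq> {1..n}"
proof -
  show "finite e" "card e = d - 1"
    using simplicial unfolding simplicial_def submaximal_def by auto
  from simplicial obtain F where "F \<in> C" "e \<subseteq> F"
    unfolding simplicial_def submaximal_def by auto
  then show "e \<subseteq> {1..n}" using uniform unfolding uniform_clutter_def by auto
qed

lemma open_nbhd_disjoint: "open_nbhd n C e \<inter> e = {}"
proof -
  have "e \<notin> C" using uniform card_e d_pos unfolding uniform_clutter_def by auto
  then show ?thesis unfolding open_nbhd_def by (auto simp: insert_absorb)
qed

lemma open_nbhd_nonempty: "open_nbhd n C e \<noteq> {}"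
proof -
  from simplicial obtain F where F: "F \<in> C" "e \<subseteq> F"
    unfolding simplicial_def submaximal_def by auto
  then have F_n: "F \<subseteq> {1..n}" and "card F = d"
    using uniform unfolding uniform_clutter_def by auto
  then have "card (F - e) = 1"
    using F(2) finite_e card_e d_pos by (simp add: card_Diff_subset)
  then obtain c where "F - e = {c}" by (rule card_1_singletonE)
  then have "e \<union> {c} = F" and "c \<in> {1..n}" using F(2) F_n by auto
  then show ?thesis unfolding open_nbhd_def using F(1) by auto
qed

lemma extension_mem_if_clique:
  assumes "is_clique d X V" and "e \<subseteq> V" and "c \<in> V - e"
  shows "e \<union> {c} \<in> X"
  using assms finite_e card_e d_pos unfolding is_clique_def by auto

lemma large_cliques_deletion:
  "large_cliques n d (deletion C e) = {V \<in> large_cliques n d C. \<not> e \<subseteq> V}"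
proof (intro set_eqI iffI)
  fix V assume V: "V \<in> large_cliques n d (deletion C e)"
  then have clique: "is_clique d (deletion C e) V"
    unfolding large_cliques_def clique_complex_def by simp
  have "\<not> e \<subseteq> V"
  proof
    assume "e \<subseteq> V"
    moreover obtain c where "c \<in> V - e"
      using large_clique_not_subset[OF V finite_e] card_e d_pos by auto
    ultimately have "e \<union> {c} \<in> deletion C e"
      using extension_mem_if_clique[OF clique] by simp
    then show False unfolding deletion_def by auto
  qed
  moreover have "is_clique d C V"
    using clique by (rule is_clique_mono) (simp add: deletion_def)
  ultimately show "V \<in> {V \<in> large_cliques n d C. \<not> e \<subseteq> V}"
    using V unfolding large_cliques_def clique_complex_def by simp
next
  fix V assume "V \<in> {V \<in> large_cliques n d C. \<not> e \<subseteq> V}"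
  then have V: "V \<in> large_cliques n d C" and "\<not> e \<subseteq> V" by simp_all
  then have "is_clique d (deletion C e) V"
    unfolding large_cliques_def clique_complex_def is_clique_def deletion_def by auto
  then show "V \<in> large_cliques n d (deletion C e)"
    using V unfolding large_cliques_def clique_complex_def by simp
qed

lemma large_cliques_containing:
  "{V \<in> large_cliques n d C. e \<subseteq> V} = (\<union>) e ` (Pow (open_nbhd n C e) - {{}})"
proof (intro set_eqI iffI)
  fix V assume "V \<in> {V \<in> large_cliques n d C. e \<subseteq> V}"
  then have V: "V \<in> large_cliques n d C" and "e \<subseteq> V" by simp_all
  then have "is_clique d C V" and "V \<subseteq> {1..n}"
    unfolding large_cliques_def clique_complex_def by simp_all
  have "V - e \<subseteq> open_nbhd n C e"
  proof
    fix c assume "c \<in> V - e"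
    then have "e \<union> {c} \<in> C"
      using extension_mem_if_clique[OF \<open>is_clique d C V\<close> \<open>e \<subseteq> V\<close>] by simp
    then show "c \<in> open_nbhd n C e"
      using \<open>c \<in> V - e\<close> \<open>V \<subseteq> {1..n}\<close> unfolding open_nbhd_def by auto
  qed
  moreover have "V - e \<noteq> {}"
    using large_clique_not_subset[OF V finite_e] card_e d_pos by auto
  moreover have "V = e \<union> (V - e)" using \<open>e \<subseteq> V\<close> by auto
  ultimately show "V \<in> (\<union>) e ` (Pow (open_nbhd n C e) - {{}})" by blast
next
  fix V assume "V \<in> (\<union>) e ` (Pow (open_nbhd n C e) - {{}})"
  then obtain S where S: "S \<subseteq> open_nbhd n C e" "S \<noteq> {}" and V: "V = e \<union> S" by auto
  have "finite S" using S(1) finite_open_nbhd by (rule finite_subset)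
  have "is_clique d C (closed_nbhd n C e)"
    using simplicial unfolding simplicial_def by simp
  moreover have "V \<subseteq> closed_nbhd n C e"
    using S(1) unfolding V closed_nbhd_def by auto
  ultimately have "is_clique d C V" by (rule is_clique_subset)
  moreover have "card V = d - 1 + card S"
    using S(1) \<open>finite S\<close> finite_e card_e open_nbhd_disjoint
    unfolding V by (subst card_Un_disjoint) auto
  moreover have "card S \<ge> 1"
    using S(2) \<open>finite S\<close> by (simp add: Suc_leI card_gt_0_iff)
  moreover have "V \<subseteq> {1..n}"
    using S(1) e_subset open_nbhd_subset[of n C e] unfolding V by auto
  ultimately show "V \<in> {V \<in> large_cliques n d C. e \<subseteq> V}"
    using d_pos unfolding V large_cliques_def clique_complex_def by auto
qed

lemma f_poly_large_cliques_deletion: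
  "f_poly (large_cliques n d C) =
     f_poly (large_cliques n d (deletion C e))
     + monom 1 (d - 1) * ([:1, 1:] ^ card (open_nbhd n C e) - 1)"
proof -
  let ?J = "(\<union>) e ` (Pow (open_nbhd n C e) - {{}})"
  have split: "large_cliques n d C = large_cliques n d (deletion C e) \<union> ?J"
    unfolding large_cliques_deletion large_cliques_containing[symmetric] by blast
  have disjoint: "large_cliques n d (deletion C e) \<inter> ?J = {}"
    unfolding large_cliques_deletion large_cliques_containing[symmetric] by blast
  have finite: "finite (large_cliques n d (deletion C e))"
    unfolding large_cliques_def using finite_clique_complex by simp
  have "S \<in> Pow (open_nbhd n C e) - {{}} \<Longrightarrow> finite S \<and> S \<inter> e = {}" for S
    using finite_open_nbhd open_nbhd_disjoint by (auto dest: finite_subset)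
  note join = f_poly_join[OF finite_e this]
  have "f_poly (large_cliques n d C) = f_poly (large_cliques n d (deletion C e)) + f_poly ?J"
    unfolding split using finite finite_open_nbhd disjoint by (intro f_poly_union) simp_all
  also have "f_poly ?J = monom 1 (d - 1) * f_poly (Pow (open_nbhd n C e) - {{}})"
    using join by (simp only: card_e)
  also have "f_poly (Pow (open_nbhd n C e) - {{}}) = f_poly (Pow (open_nbhd n C e)) - 1"
    unfolding f_poly_def by (simp add: sum_diff1 finite_open_nbhd)
  finally show ?thesis by (simp only: f_poly_Pow[OF finite_open_nbhd])
qed

end

lemma simplicial_numbers_bounds:
  assumes "d \<ge> 1" "uniform_clutter n d C" "is_simplicial_order n d C es"
  shows "\<forall>N \<in> set (simplicial_numbers n C es). 1 \<le> N \<and> N \<le> n"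
  using assms(2,3)
proof (induction es arbitrary: C)
  case (Cons e es)
  interpret simplicial_deletion n d C e
    using assms(1) Cons.prems by unfold_locales auto
  have order_deletion: "is_simplicial_order n d (deletion C e) es"
    using Cons.prems(2) by simp
  have "1 \<le> card (open_nbhd n C e)" "card (open_nbhd n C e) \<le> n"
    using open_nbhd_nonempty finite_open_nbhd card_mono[OF _ open_nbhd_subset]
    by (auto simp: Suc_leI card_gt_0_iff)
  moreover have "\<forall>N \<in> set (simplicial_numbers n (deletion C e) es). 1 \<le> N \<and> N \<le> n"
    using Cons.IH[OF uniform_clutter_deletion[OF Cons.prems(1)] order_deletion] .
  ultimately show ?case unfolding simplicial_numbers.simps(2) list.set by blast
qed simp

lemma f_poly_large_cliques:
  assumes "d \<ge> 1" "uniform_clutter n d C" "is_simplicial_order n d C es"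
  shows "f_poly (large_cliques n d C) =
           monom 1 (d - 1) * (\<Sum>N\<leftarrow>simplicial_numbers n C es. [:1, 1:] ^ N - 1)"
  using assms(2,3)
proof (induction es arbitrary: C)
  case Nil
  then show ?case using large_cliques_empty[OF assms(1)] by (simp add: f_poly_def)
next
  case (Cons e es)
  interpret simplicial_deletion n d C e
    using assms(1) Cons.prems by unfold_locales auto
  have order_deletion: "is_simplicial_order n d (deletion C e) es"
    using Cons.prems(2) by simp
  have "f_poly (large_cliques n d C) =
      f_poly (large_cliques n d (deletion C e))
      + monom 1 (d - 1) * ([:1, 1:] ^ card (open_nbhd n C e) - 1)"
    by (rule f_poly_large_cliques_deletion)
  also have "f_poly (large_cliques n d (deletion C e)) =
      monom 1 (d - 1) * (\<Sum>N\<leftarrow>simplicial_numbers n (deletion C e) es. [:1, 1:] ^ N - 1)"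
    using Cons.IH[OF uniform_clutter_deletion[OF Cons.prems(1)] order_deletion] .
  finally show ?case
    by (simp only: simplicial_numbers.simps(2) list.map sum_list.Cons distrib_left add.commute)
qed

lemma f_poly_clique_complex:
  assumes "d \<ge> 1" "uniform_clutter n d C" "is_simplicial_order n d C es"
  shows "f_poly (clique_complex n d C) =
           (\<Sum>i<d. monom (int (n choose i)) i)
           + monom 1 (d - 1) * (\<Sum>N\<leftarrow>simplicial_numbers n C es. [:1, 1:] ^ N - 1)"
  using f_poly_clique_complex_split f_poly_large_cliques[OF assms] by simp

lemma card_faces_clique_complex:
  assumes "d \<ge> 1" "uniform_clutter n d C" "is_simplicial_order n d C es" and "i \<ge> 1"
  shows "card {\<sigma> \<in> clique_complex n d C. card \<sigma> = d - 1 + i} =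
           (\<Sum>N\<leftarrow>simplicial_numbers n C es. N choose i)"
proof -
  have "int (card {\<sigma> \<in> clique_complex n d C. card \<sigma> = d - 1 + i}) =
      coeff (f_poly (clique_complex n d C)) (d - 1 + i)"
    by (simp add: coeff_f_poly finite_clique_complex)
  also have "\<dots> = coeff (\<Sum>j<d. monom (int (n choose j)) j) (d - 1 + i)
      + coeff (monom 1 (d - 1) * (\<Sum>N\<leftarrow>simplicial_numbers n C es. [:1, 1:] ^ N - 1)) (d - 1 + i)"
    by (simp add: f_poly_clique_complex[OF assms(1-3)])
  also have "coeff (\<Sum>j<d. monom (int (n choose j)) j) (d - 1 + i) = 0"
    using assms(4) by (simp add: coeff_sum coeff_monom)
  also have "coeff (monom 1 (d - 1) * (\<Sum>N\<leftarrow>simplicial_numbers n C es. [:1, 1:] ^ N - 1)) (d - 1 + i)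
      = int (\<Sum>N\<leftarrow>simplicial_numbers n C es. N choose i)"
    using assms(4) by (simp add: coeff_monom_mult coeff_sum_list_one_plus_X_powers)
  finally show ?thesis by simp
qed

theorem proposition2p1:
  fixes n d :: nat and C :: "nat set set" and es :: "nat set list"
  assumes "d \<ge> 1"
    and "uniform_clutter n d C"
    and "is_simplicial_order n d C es"
  shows "(f_poly (clique_complex n d C) =
           (\<Sum>i<d. monom (int (n choose i)) i)
           + monom 1 (d - 1) * (\<Sum>i\<in>{1..n}.
                monom (int (\<Sum>N\<leftarrow>simplicial_numbers n C es. N choose i)) i))
     \<and> (f_poly (clique_complex n d C) =
           (\<Sum>i<d. monom (int (n choose i)) i)
           + monom 1 (d - 1) * (\<Sum>N\<leftarrow>simplicial_numbers n C es. [:1, 1:] ^ N - 1))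
     \<and> (C \<noteq> {} \<longrightarrow> complex_dim (clique_complex n d C) =
           int (Max (set (simplicial_numbers n C es))) + int d - 2)"
proof (intro conjI impI)
  let ?L = "simplicial_numbers n C es"
  have bounds: "\<forall>N \<in> set ?L. 1 \<le> N \<and> N \<le> n"
    using simplicial_numbers_bounds[OF assms] .
  show "f_poly (clique_complex n d C) =
      (\<Sum>i<d. monom (int (n choose i)) i) + monom 1 (d - 1) * (\<Sum>N\<leftarrow>?L. [:1, 1:] ^ N - 1)"
    using f_poly_clique_complex[OF assms] .
  then show "f_poly (clique_complex n d C) =
      (\<Sum>i<d. monom (int (n choose i)) i)
      + monom 1 (d - 1) * (\<Sum>i\<in>{1..n}. monom (int (\<Sum>N\<leftarrow>?L. N choose i)) i)"
    using sum_list_one_plus_X_powers_eq[of ?L n] bounds by simp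
  assume "C \<noteq> {}"
  then have "?L \<noteq> []" using assms(3) by (cases es) auto
  then have "Max (card ` clique_complex n d C) = d - 1 + Max (set ?L)"
    using bounds card_faces_clique_complex[OF assms]
    by (intro Max_card_eq_add_Max) (simp_all add: finite_clique_complex)
  then show "complex_dim (clique_complex n d C) = int (Max (set ?L)) + int d - 2"
    unfolding complex_dim_def using assms(1) by simp
qed

end
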